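(* Let $W$ be an sc-Banach space, $E=\mathbb R^n\oplus W$ and $C=[0,\infty)^n\oplus W$. If a finite-dimensional subspace $N\subset E$ is neat with respect to $C$, then $N$ is in good position to $C$ and $C\cap N$ is a partial quadrant in $N$.
   Context: An sc-Banach space is a Banach space $W$ with a nested sequence of Banach spaces $W=W_0\supset W_1\supset\cdots$ with compact inclusions $W_n\to W_m$ ($m<n$) and $\bigcap W_m$ dense in each $W_m$; $E=\mathbb R^n\oplus W$ has levels $\mathbb R^n\oplus W_m$, and $\|\cdot\|$ is its level-$0$ norm. An sc-complement of a closed subspace $N$ is a closed subspace $N^\perp$ with $E_m=(N\cap E_m)\oplus(N^\perp\cap E_m)$ topologically for every $m$, both being sc-subspaces (i.e. their intersections with the levels form sc-structures). A finite-dimensional subspace $N$ is neat with respect to $C$ if it has an sc-complement $N^\perp$ with $N^\perp\subset C$. $N$ is in good position to $C$ if $N\cap C$ has nonempty interior in $N$ and there exist an sc-complement $N^\perp$ and $c>0$ such that for $(n,m)\in N\oplus N^\perp$ with $\|m\|\le c\|n\|$: $n+m\in C$ iff $n\in C$. A partial quadrant in a finite-dimensional space $N$ is the image of $[0,\infty)^k\oplus\mathbb R^{d-k}$ under a linear isomorphism $\mathbb R^d\to N$. *)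

theory Defs
  imports "HOL-Analysis.Analysis"
begin

definition norm_on :: "'w::real_vector set \<Rightarrow> ('w \<Rightarrow> real) \<Rightarrow> bool" where
  "norm_on S p \<longleftrightarrow> subspace S \<and>
     (\<forall>x\<in>S. 0 \<le> p x \<and> (p x = 0 \<longleftrightarrow> x = 0)) \<and>
     (\<forall>x\<in>S. \<forall>y\<in>S. p (x + y) \<le> p x + p y) \<and>
     (\<forall>a. \<forall>x\<in>S. p (a *\<^sub>R x) = \<bar>a\<bar> * p x)"

definition banach_on :: "'w::real_vector set \<Rightarrow> ('w \<Rightarrow> real) \<Rightarrow> bool" where
  "banach_on S p \<longleftrightarrow> norm_on S p \<and>
     (\<forall>X. (\<forall>k. X k \<in> S) \<and> (\<forall>e>0. \<exists>M::nat. \<forall>i\<ge>M. \<forall>j\<ge>M. p (X i - X j) < e)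
          \<longrightarrow> (\<exists>x\<in>S. \<forall>e>0. \<exists>M::nat. \<forall>i\<ge>M. p (X i - x) < e))"

definition sc_banach :: "(nat \<Rightarrow> 'w::banach set) \<Rightarrow> (nat \<Rightarrow> 'w \<Rightarrow> real) \<Rightarrow> bool" where
  "sc_banach Wl nrm \<longleftrightarrow>
     Wl 0 = UNIV \<and> nrm 0 = norm \<and>
     (\<forall>m. banach_on (Wl m) (nrm m)) \<and>
     (\<forall>m. Wl (Suc m) \<subseteq> Wl m) \<and>
     (\<forall>m n. m < n \<longrightarrow>
        (\<forall>X::nat\<Rightarrow>'w. (\<forall>k. X k \<in> Wl n) \<and> (\<exists>B. \<forall>k. nrm n (X k) \<le> B) \<longrightarrow>
           (\<exists>r x. strict_mono r \<and> x \<in> Wl m \<and>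
               (\<forall>e>0. \<exists>M::nat. \<forall>i\<ge>M. nrm m (X (r i) - x) < e)))) \<and>
     (\<forall>m. \<forall>x\<in>Wl m. \<forall>e>0. \<exists>y\<in>(\<Inter>k. Wl k). nrm m (x - y) < e)"

definition El :: "(nat \<Rightarrow> 'w::banach set) \<Rightarrow> nat \<Rightarrow> ((real^'n) \<times> 'w) set" where
  "El Wl m = {z. snd z \<in> Wl m}"

definition nrmE :: "(nat \<Rightarrow> 'w::banach \<Rightarrow> real) \<Rightarrow> nat \<Rightarrow> ((real^'n) \<times> 'w) \<Rightarrow> real" where
  "nrmE nrm m z = sqrt ((norm (fst z))\<^sup>2 + (nrm m (snd z))\<^sup>2)"

definition quadC :: "((real^'n) \<times> 'w::banach) set" where
  "quadC = {z. \<forall>i. 0 \<le> fst z $ i}"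

definition closed_level ::
  "(nat \<Rightarrow> 'w::banach set) \<Rightarrow> (nat \<Rightarrow> 'w \<Rightarrow> real) \<Rightarrow> nat \<Rightarrow> ((real^'n) \<times> 'w) set \<Rightarrow> bool" where
  "closed_level Wl nrm m F \<longleftrightarrow>
     (\<forall>X z. (\<forall>k. X k \<in> F \<inter> El Wl m) \<and> z \<in> El Wl m \<and>
            (\<forall>e>0. \<exists>M::nat. \<forall>i\<ge>M. nrmE nrm m (X i - z) < e) \<longrightarrow> z \<in> F)"

definition sc_subspace ::
  "(nat \<Rightarrow> 'w::banach set) \<Rightarrow> (nat \<Rightarrow> 'w \<Rightarrow> real) \<Rightarrow> ((real^'n) \<times> 'w) set \<Rightarrow> bool" where
  "sc_subspace Wl nrm F \<longleftrightarrow> subspace F \<and> closed F \<and>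
     (\<forall>m. closed_level Wl nrm m F) \<and>
     (\<forall>m. \<forall>z\<in>F \<inter> El Wl m. \<forall>e>0. \<exists>y\<in>F \<inter> (\<Inter>k. El Wl k). nrmE nrm m (z - y) < e)"

text \<open>S = A \<oplus> B topologically w.r.t. the norm p (bounded projection).\<close>
definition top_direct_sum :: "'a::real_vector set \<Rightarrow> 'a set \<Rightarrow> 'a set \<Rightarrow> ('a \<Rightarrow> real) \<Rightarrow> bool" where
  "top_direct_sum S A B p \<longleftrightarrow> subspace A \<and> subspace B \<and> A \<subseteq> S \<and> B \<subseteq> S \<and>
     (\<forall>z\<in>S. \<exists>!ab. fst ab \<in> A \<and> snd ab \<in> B \<and> z = fst ab + snd ab) \<and>
     (\<exists>K. \<forall>a\<in>A. \<forall>b\<in>B. p a \<le> K * p (a + b))"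

definition sc_complement ::
  "(nat \<Rightarrow> 'w::banach set) \<Rightarrow> (nat \<Rightarrow> 'w \<Rightarrow> real) \<Rightarrow> ((real^'n) \<times> 'w) set \<Rightarrow> ((real^'n) \<times> 'w) set \<Rightarrow> bool" where
  "sc_complement Wl nrm N M \<longleftrightarrow> closed N \<and> closed M \<and> subspace N \<and> subspace M \<and>
     sc_subspace Wl nrm N \<and> sc_subspace Wl nrm M \<and>
     (\<forall>m. top_direct_sum (El Wl m) (N \<inter> El Wl m) (M \<inter> El Wl m) (nrmE nrm m))"

definition neat ::
  "(nat \<Rightarrow> 'w::banach set) \<Rightarrow> (nat \<Rightarrow> 'w \<Rightarrow> real) \<Rightarrow> ((real^'n) \<times> 'w) set \<Rightarrow> ((real^'n) \<times> 'w) set \<Rightarrow> bool" where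
  "neat Wl nrm N C \<longleftrightarrow> (\<exists>M. sc_complement Wl nrm N M \<and> M \<subseteq> C)"

definition good_position ::
  "(nat \<Rightarrow> 'w::banach set) \<Rightarrow> (nat \<Rightarrow> 'w \<Rightarrow> real) \<Rightarrow> ((real^'n) \<times> 'w) set \<Rightarrow> ((real^'n) \<times> 'w) set \<Rightarrow> bool" where
  "good_position Wl nrm N C \<longleftrightarrow>
     (\<exists>U. openin (top_of_set N) U \<and> U \<noteq> {} \<and> U \<subseteq> N \<inter> C) \<and>
     (\<exists>M c. sc_complement Wl nrm N M \<and> c > 0 \<and>
        (\<forall>a\<in>N. \<forall>b\<in>M. norm b \<le> c * norm a \<longrightarrow> (a + b \<in> C \<longleftrightarrow> a \<in> C)))"

text \<open>R^d modelled as functions nat \<Rightarrow> real vanishing from index d on.\<close>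
definition Rd :: "nat \<Rightarrow> (nat \<Rightarrow> real) set" where
  "Rd d = {t. \<forall>i\<ge>d. t i = 0}"

definition partial_quadrant :: "'a::real_vector set \<Rightarrow> 'a set \<Rightarrow> bool" where
  "partial_quadrant N Q \<longleftrightarrow> (\<exists>d k L. k \<le> d \<and>
     (\<forall>s\<in>Rd d. \<forall>t\<in>Rd d. L (\<lambda>i. s i + t i) = L s + L t) \<and>
     (\<forall>a. \<forall>t\<in>Rd d. L (\<lambda>i. a * t i) = a *\<^sub>R L t) \<and>
     inj_on L (Rd d) \<and> L ` Rd d = N \<and>
     L ` {t\<in>Rd d. \<forall>i<k. 0 \<le> t i} = Q)"

end

theory Submission
  imports Defs
begin

text \<open>A linear subspace contained in the quadrant contains b and -b, so it lies in
  0 \<oplus> W. The complement M of a neat N is therefore invisible to the \<real>^n-coordinates: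
  fst (a + b) = fst a, which gives good position for every constant c, and since
  N \<oplus> M = E the map fst sends N onto \<real>^n. Lifting the standard basis of \<real>^n to N and
  adding a basis of the kernel N \<inter> (0 \<oplus> W) yields a linear chart \<real>^(n+m) \<cong> N in which
  C \<inter> N becomes [0,\<infinity>)^n \<oplus> \<real>^m.\<close>

lemma fst_eq_0_if_subspace_subset_quadC:
  assumes "subspace M" "M \<subseteq> quadC" "b \<in> M"
  shows "fst b = 0"
proof -
  have "b \<in> quadC" "- b \<in> quadC"
    using assms subspace_neg by blast+
  then show ?thesis
    by (auto simp: quadC_def vec_eq_iff intro: order.antisym)
qed

lemma add_mem_quadC_iff:
  assumes "fst b = 0"
  shows "a + b \<in> quadC \<longleftrightarrow> a \<in> quadC"
  using assms by (simp add: quadC_def)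

lemma sc_complement_decompose:
  assumes "sc_banach Wl nrm" "sc_complement Wl nrm N M"
  obtains a b where "a \<in> N" "b \<in> M" "z = a + b"
proof -
  have "El Wl 0 = UNIV"
    using assms(1) by (simp add: sc_banach_def El_def)
  moreover have "top_direct_sum (El Wl 0) (N \<inter> El Wl 0) (M \<inter> El Wl 0) (nrmE nrm 0)"
    using assms(2) by (simp add: sc_complement_def)
  ultimately have "\<exists>ab. fst ab \<in> N \<and> snd ab \<in> M \<and> z = fst ab + snd ab"
    unfolding top_direct_sum_def by blast
  then show ?thesis
    using that by blast
qed

lemma fst_image_eq_UNIV_if_complement_in_quadC:
  assumes "sc_banach Wl nrm" "sc_complement Wl nrm N M" "M \<subseteq> quadC"
  shows "fst ` N = UNIV"
proof -
  have "x \<in> fst ` N" for x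
  proof -
    obtain a b where ab: "a \<in> N" "b \<in> M" "(x, 0) = a + b"
      by (rule sc_complement_decompose[OF assms(1,2)])
    have "fst b = 0"
      using assms(2,3) ab(2)
      by (auto simp: sc_complement_def intro: fst_eq_0_if_subspace_subset_quadC)
    with ab show ?thesis
      by (metis add.right_neutral fst_add fst_conv image_eqI)
  qed
  then show ?thesis by blast
qed

lemma open_positive_quadrant:
  "open {z :: (real^'n) \<times> 'w::real_normed_vector. \<forall>i. 0 < fst z $ i}"
proof -
  have "{z :: (real^'n) \<times> 'w. \<forall>i. 0 < fst z $ i} = (\<Inter>i. {z. 0 < fst z $ i})"
    by auto
  moreover have "open {z :: (real^'n) \<times> 'w. 0 < fst z $ i}" for i
    by (intro open_Collect_less continuous_intros)
  ultimately show ?thesis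
    by (simp add: open_INT)
qed

lemma good_position_quadCI:
  assumes "fst ` N = UNIV" "sc_complement Wl nrm N M" "M \<subseteq> quadC"
  shows "good_position Wl nrm N quadC"
proof -
  let ?U = "N \<inter> {z. \<forall>i. 0 < fst z $ i}"
  have "openin (top_of_set N) ?U"
    by (rule openin_open_Int[OF open_positive_quadrant])
  moreover obtain a where "a \<in> N" "fst a = (\<chi> i. 1)"
    using assms(1) by (metis UNIV_I imageE)
  then have "?U \<noteq> {}" by auto
  moreover have "?U \<subseteq> N \<inter> quadC"
    by (auto simp: quadC_def less_imp_le)
  ultimately have "\<exists>U. openin (top_of_set N) U \<and> U \<noteq> {} \<and> U \<subseteq> N \<inter> quadC"
    by blast
  moreover have "fst b = 0" if "b \<in> M" for b
    using assms(2,3) that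
    by (auto simp: sc_complement_def intro: fst_eq_0_if_subspace_subset_quadC)
  then have "\<forall>a\<in>N. \<forall>b\<in>M. norm b \<le> 1 * norm a \<longrightarrow> (a + b \<in> quadC \<longleftrightarrow> a \<in> quadC)"
    by (simp add: add_mem_quadC_iff)
  ultimately show ?thesis
    unfolding good_position_def using assms(2) zero_less_one by blast
qed

lemma span_image_lessThanE:
  fixes g :: "nat \<Rightarrow> 'a::real_vector"
  assumes "inj_on g {..<m}" "x \<in> span (g ` {..<m})"
  obtains c where "x = (\<Sum>i<m. c i *\<^sub>R g i)"
proof -
  obtain u where "x = (\<Sum>v\<in>g ` {..<m}. u v *\<^sub>R v)"
    using assms(2) span_finite[of "g ` {..<m}"] by auto
  also have "\<dots> = (\<Sum>i<m. u (g i) *\<^sub>R g i)"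
    using sum.reindex[OF assms(1)] by simp
  finally show ?thesis
    by (rule that)
qed

lemma independent_image_lessThan_coeff_eq_0:
  fixes g :: "nat \<Rightarrow> 'a::real_vector"
  assumes "inj_on g {..<m}" "independent (g ` {..<m})"
    and "(\<Sum>i<m. c i *\<^sub>R g i) = 0" "i < m"
  shows "c i = 0"
proof -
  define u where "u v = c (inv_into {..<m} g v)" for v
  have "(\<Sum>v\<in>g ` {..<m}. u v *\<^sub>R v) = (\<Sum>i<m. c i *\<^sub>R g i)"
    using assms(1) by (simp add: sum.reindex u_def)
  then have "\<forall>v\<in>g ` {..<m}. u v = 0"
    using assms(2,3) dependent_finite[of "g ` {..<m}"] by auto
  then show ?thesis
    using assms(1,4) by (auto simp: u_def)
qed

lemma sum_scaleR_axis_nth: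
  fixes h :: "nat \<Rightarrow> 'n::finite" and c :: "nat \<Rightarrow> real"
  assumes "inj_on h {..<n}" "i < n"
  shows "(\<Sum>k<n. c k *\<^sub>R (axis (h k) 1 :: real^'n)) $ h i = c i"
proof -
  have "(\<Sum>k<n. c k *\<^sub>R (axis (h k) 1 :: real^'n)) $ h i
      = (\<Sum>k<n. c k * (if h i = h k then 1 else 0))"
    by (simp add: axis_def)
  also have "\<dots> = (\<Sum>k<n. if k = i then c i else 0)"
    using assms by (intro sum.cong) (auto simp: inj_on_def)
  finally show ?thesis
    using assms(2) by simp
qed

lemma sum_nth_scaleR_axis_reindex:
  fixes h :: "nat \<Rightarrow> 'n::finite"
  assumes "bij_betw h {..<n} UNIV"
  shows "(\<Sum>k<n. x $ h k *\<^sub>R (axis (h k) 1 :: real^'n)) = x"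
  using sum.reindex_bij_betw[OF assms, of "\<lambda>j. x $ j *\<^sub>R axis j 1"] basis_expansion[of x]
  by (metis (no_types) scalar_mult_eq_scaleR)

locale adapted_frame =
  fixes f :: "'a::real_vector \<Rightarrow> real^'n" and N :: "'a set"
    and h :: "nat \<Rightarrow> 'n" and n :: nat and A :: "'n \<Rightarrow> 'a"
    and g :: "nat \<Rightarrow> 'a" and m :: nat
  assumes linear: "linear f" and subspace: "subspace N"
    and h_bij: "bij_betw h {..<n} UNIV"
    and A_mem: "A j \<in> N" and f_A: "f (A j) = axis j 1"
    and g_mem: "i < m \<Longrightarrow> g i \<in> N" and f_g: "i < m \<Longrightarrow> f (g i) = 0"
    and g_inj: "inj_on g {..<m}" and g_independent: "independent (g ` {..<m})"
    and kernel_subset_span: "N \<inter> {z. f z = 0} \<subseteq> span (g ` {..<m})"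
begin

definition chart :: "(nat \<Rightarrow> real) \<Rightarrow> 'a" where
  "chart t = (\<Sum>i<n. t i *\<^sub>R A (h i)) + (\<Sum>i<m. t (n + i) *\<^sub>R g i)"

lemma chart_add: "chart (\<lambda>i. s i + t i) = chart s + chart t"
  by (simp add: chart_def scaleR_add_left sum.distrib)

lemma chart_scale: "chart (\<lambda>i. a * t i) = a *\<^sub>R chart t"
  by (simp add: chart_def scaleR_add_right scaleR_sum_right)

lemma chart_diff: "chart (\<lambda>i. s i - t i) = chart s - chart t"
  by (simp add: chart_def scaleR_diff_left sum_subtractf algebra_simps)

lemma chart_mem: "chart t \<in> N"
  unfolding chart_def using subspace A_mem g_mem
  by (intro subspace_add subspace_sum subspace_scale) auto

lemma f_chart: "f (chart t) = (\<Sum>i<n. t i *\<^sub>R axis (h i) 1)"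
  using linear by (simp add: chart_def linear_add linear_sum linear_scale f_A f_g)

lemma h_inj: "inj_on h {..<n}"
  using h_bij by (rule bij_betw_imp_inj_on)

lemma f_chart_nth: "i < n \<Longrightarrow> f (chart t) $ h i = t i"
  unfolding f_chart by (rule sum_scaleR_axis_nth[OF h_inj])

lemma chart_image: "chart ` Rd (n + m) = N"
proof
  show "chart ` Rd (n + m) \<subseteq> N"
    using chart_mem by blast
  show "N \<subseteq> chart ` Rd (n + m)"
  proof
    fix a assume a: "a \<in> N"
    define x where "x = f a"
    define b where "b = a - (\<Sum>i<n. x $ h i *\<^sub>R A (h i))"
    have "b \<in> N"
      unfolding b_def using a A_mem subspace
      by (intro subspace_diff subspace_sum subspace_scale) auto
    moreover have "f b = 0"
      using linear sum_nth_scaleR_axis_reindex[OF h_bij, of x]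
      by (simp add: b_def x_def linear_diff linear_sum linear_scale f_A)
    ultimately obtain c where c: "b = (\<Sum>i<m. c i *\<^sub>R g i)"
      using kernel_subset_span span_image_lessThanE[OF g_inj] by blast
    define t where "t i = (if i < n then x $ h i else if i < n + m then c (i - n) else 0)" for i
    have "chart t = (\<Sum>i<n. x $ h i *\<^sub>R A (h i)) + (\<Sum>i<m. c i *\<^sub>R g i)"
      unfolding chart_def by (intro arg_cong2[where f = "(+)"] sum.cong) (auto simp: t_def)
    also have "\<dots> = a"
      using c unfolding b_def by (simp add: diff_eq_eq add.commute)
    finally have "chart t = a" .
    moreover have "t \<in> Rd (n + m)"
      by (simp add: Rd_def t_def)
    ultimately show "a \<in> chart ` Rd (n + m)"
      by blast
  qed
qed

lemma chart_eq_0_imp: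
  assumes "t \<in> Rd (n + m)" "chart t = 0"
  shows "t i = 0"
proof -
  have head: "t i = 0" if "i < n" for i
    using f_chart_nth[OF that, of t] assms(2) linear by (simp add: linear_0)
  then have "(\<Sum>i<m. t (n + i) *\<^sub>R g i) = 0"
    using assms(2) by (simp add: chart_def)
  then have tail: "t (n + i) = 0" if "i < m" for i
    using independent_image_lessThan_coeff_eq_0[OF g_inj g_independent, of "\<lambda>i. t (n + i)"] that
    by blast
  consider "i < n" | "n \<le> i" "i < n + m" | "n + m \<le> i"
    by linarith
  then show ?thesis
  proof cases
    case 1
    then show ?thesis by (rule head)
  next
    case 2
    then show ?thesis using tail[of "i - n"] by simp
  next
    case 3
    then show ?thesis using assms(1) by (simp add: Rd_def)
  qed
qed

lemma inj_on_chart: "inj_on chart (Rd (n + m))"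
proof (rule inj_onI)
  fix s t assume "s \<in> Rd (n + m)" "t \<in> Rd (n + m)" "chart s = chart t"
  then have "s i - t i = 0" for i
    by (intro chart_eq_0_imp[where t = "\<lambda>i. s i - t i"]) (auto simp: Rd_def chart_diff)
  then show "s = t" by auto
qed

lemma f_chart_nonneg_iff: "(\<forall>j. 0 \<le> f (chart t) $ j) \<longleftrightarrow> (\<forall>i<n. 0 \<le> t i)"
proof
  assume "\<forall>j. 0 \<le> f (chart t) $ j"
  then show "\<forall>i<n. 0 \<le> t i"
    using f_chart_nth by metis
next
  assume t: "\<forall>i<n. 0 \<le> t i"
  show "\<forall>j. 0 \<le> f (chart t) $ j"
  proof
    fix j
    obtain i where "i < n" "j = h i"
      using h_bij unfolding bij_betw_def by blast
    then show "0 \<le> f (chart t) $ j"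
      using t f_chart_nth by simp
  qed
qed

lemma chart_nonneg_image:
  "chart ` {t \<in> Rd (n + m). \<forall>i<n. 0 \<le> t i} = {z \<in> N. \<forall>j. 0 \<le> f z $ j}"
proof
  show "chart ` {t \<in> Rd (n + m). \<forall>i<n. 0 \<le> t i} \<subseteq> {z \<in> N. \<forall>j. 0 \<le> f z $ j}"
    using chart_mem f_chart_nonneg_iff by blast
  show "{z \<in> N. \<forall>j. 0 \<le> f z $ j} \<subseteq> chart ` {t \<in> Rd (n + m). \<forall>i<n. 0 \<le> t i}"
  proof
    fix z assume z: "z \<in> {z \<in> N. \<forall>j. 0 \<le> f z $ j}"
    then obtain t where "t \<in> Rd (n + m)" "z = chart t"
      using chart_image by blast
    with z show "z \<in> chart ` {t \<in> Rd (n + m). \<forall>i<n. 0 \<le> t i}"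
      using f_chart_nonneg_iff by blast
  qed
qed

lemma partial_quadrant_nonneg: "partial_quadrant N {z \<in> N. \<forall>j. 0 \<le> f z $ j}"
  unfolding partial_quadrant_def
  by (intro exI[of _ "n + m"] exI[of _ n] exI[of _ chart] conjI ballI allI)
     (simp_all add: chart_add chart_scale inj_on_chart chart_image chart_nonneg_image)

end

lemma partial_quadrant_nonneg_coordinates:
  fixes f :: "'a::real_vector \<Rightarrow> real^'n"
  assumes "linear f" "subspace N" "\<exists>B. finite B \<and> span B = N" "f ` N = UNIV"
  shows "partial_quadrant N {z \<in> N. \<forall>j. 0 \<le> f z $ j}"
proof -
  define K where "K = N \<inter> {z. f z = 0}"
  obtain BK where BK: "BK \<subseteq> K" "independent BK" "K \<subseteq> span BK"
    by (rule basis_exists)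
  obtain B where "finite B" "span B = N"
    using assms(3) by blast
  with BK have "finite BK"
    using independent_span_bound[of B BK] by (auto simp: K_def)
  then obtain g where g: "bij_betw g {..<card BK} BK"
    using ex_bij_betw_nat_finite lessThan_atLeast0 by metis
  obtain h :: "nat \<Rightarrow> 'n" where h: "bij_betw h {..<CARD('n)} UNIV"
    using ex_bij_betw_nat_finite[of "UNIV :: 'n set"] lessThan_atLeast0 by auto
  have "\<forall>j. \<exists>a. a \<in> N \<and> f a = axis j 1"
    using assms(4) by (metis UNIV_I imageE)
  then obtain A where A: "\<And>j. A j \<in> N" "\<And>j. f (A j) = axis j 1"
    by metis
  interpret adapted_frame f N h "CARD('n)" A g "card BK"
    using assms(1,2) h A g BK by (intro adapted_frame.intro) (auto simp: K_def bij_betw_def)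
  show ?thesis
    by (rule partial_quadrant_nonneg)
qed

theorem proposition6p2:
  fixes Wl :: "nat \<Rightarrow> 'w::banach set" and nrm :: "nat \<Rightarrow> 'w \<Rightarrow> real"
    and N :: "((real^'n) \<times> 'w) set"
  assumes "sc_banach Wl nrm"
    and "subspace N" and "\<exists>B. finite B \<and> span B = N"
    and "neat Wl nrm N quadC"
  shows "good_position Wl nrm N quadC \<and> partial_quadrant N (quadC \<inter> N)"
proof -
  obtain M where M: "sc_complement Wl nrm N M" "M \<subseteq> quadC"
    using assms(4) unfolding neat_def by blast
  have fst_N: "fst ` N = UNIV"
    using fst_image_eq_UNIV_if_complement_in_quadC[OF assms(1) M] .
  have "quadC \<inter> N = {z \<in> N. \<forall>j. 0 \<le> fst z $ j}"
    by (auto simp: quadC_def)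
  then show ?thesis
    using good_position_quadCI[OF fst_N M]
      partial_quadrant_nonneg_coordinates[OF linear_fst assms(2,3) fst_N]
    by simp
qed

end
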